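(* Every lexicographic transduction $f:\Sigma^*\rightharpoonup\Gamma^*$ (i.e. $f\in\mathsf{Lex}$) is regularity preserving: for every regular language $L\subseteq\Gamma^*$, the set $f^{-1}(L)=\{u\in\mathrm{dom}(f): f(u)\in L\}$ is regular.
   Context: Alphabets are finite. For words $u,v$ of equal length over alphabets $\Sigma_1,\Sigma_2$, $u\otimes v$ is the word over $\Sigma_1\times\Sigma_2$ with $(u\otimes v)[i]=(u[i],v[i])$. A transduction is a partial function $f:\Sigma^*\rightharpoonup\Gamma^*$. A simple transduction is a transduction $f=\sum_{i=1}^n L_i\triangleright w_i$, where $L_1,\dots,L_n\subseteq\Sigma^*$ are pairwise disjoint regular languages and each $w_i\in\Gamma^{\le 1}$ is a word of length at most 1. It satisfies $f(u)=w_i$ if $u\in L_i$, and $f(u)$ is undefined if $u\notin\bigcup_iL_i$. An ordered alphabet is a pair $\lambda=(B,\prec)$ with $B$ a finite set and $\prec$ a strict linear order on $B$. The order is extended to $B^n$ for each $n$ by: $u\prec v$ iff there is $i\le n$ with $u[i]\prec v[i]$ and $u[j]=v[j]$ for all $i<j\le n$ (most significant letter on the right). For a transduction $f:(\Sigma\times B)^*\rightharpoonup\Gamma^*$, the transduction $\mathsf{maplex}_\lambda f:\Sigma^*\rightharpoonup\Gamma^*$ maps $u$ to $f(u\otimes b_1)f(u\otimes b_2)\cdots f(u\otimes b_m)$, where $b_1\prec\cdots\prec b_m$ is the increasing enumeration of all of $B^{|u|}$. It is defined on $u$ iff every $f(u\otimes b_j)$ is defined. The classes are defined inductively: - $\mathsf{Lex}_0$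 is the class of simple transductions; - $\mathsf{Lex}_{k+1}=\{\mathsf{maplex}_\lambda f: \lambda=(B,\prec)\text{ an ordered alphabet},\ f:(\Sigma\times B)^*\rightharpoonup\Gamma^*\text{ in }\mathsf{Lex}_k\}$; - $\mathsf{Lex}=\bigcup_k\mathsf{Lex}_k$, the lexicographic transductions. Elements of $\mathsf{Lex}_k$ are called $k$-lexicographic. *)

theory Defs
  imports Main
begin

text \<open>The input alphabet of a (k+1)-lexicographic transduction is a
product Sig x B of the previous alphabet with an ordered alphabet B.  To keep a
single type across all levels, a pair (s, b) of a letter s and a B-letter b is
encoded by the constructor Ext s b; base letters are Base a.\<close>

datatype ('a, 'b) ltr = Base 'a | Ext "('a, 'b) ltr" 'b

definition regular :: "'c set \<Rightarrow> 'c list set \<Rightarrow> bool" where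
  "regular Sig L \<longleftrightarrow> finite Sig \<and> L \<subseteq> lists Sig \<and>
     (\<exists>(Q :: nat set) q0 \<delta> F. finite Q \<and> q0 \<in> Q \<and> F \<subseteq> Q \<and>
        (\<forall>q\<in>Q. \<forall>a\<in>Sig. \<delta> q a \<in> Q) \<and>
        L = {w \<in> lists Sig. fold (\<lambda>a q. \<delta> q a) w q0 \<in> F})"

definition simple_trans :: "'c set \<Rightarrow> 'g set \<Rightarrow> ('c list \<Rightarrow> 'g list option) \<Rightarrow> bool" where
  "simple_trans Sig Gamma f \<longleftrightarrow>
     (\<exists>(n :: nat) Ls ws.
        (\<forall>i<n. regular Sig (Ls i) \<and> length (ws i) \<le> 1 \<and> set (ws i) \<subseteq> Gamma) \<and>
        (\<forall>i<n. \<forall>j<n. i \<noteq> j \<longrightarrow> Ls i \<inter> Ls j = {}) \<and>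
        (\<forall>u. (\<forall>i<n. u \<in> Ls i \<longrightarrow> f u = Some (ws i)) \<and>
             ((\<forall>i<n. u \<notin> Ls i) \<longrightarrow> f u = None)))"

definition strict_linear_on :: "'b set \<Rightarrow> ('b \<Rightarrow> 'b \<Rightarrow> bool) \<Rightarrow> bool" where
  "strict_linear_on B lt \<longleftrightarrow>
     (\<forall>x\<in>B. \<not> lt x x) \<and>
     (\<forall>x\<in>B. \<forall>y\<in>B. \<forall>z\<in>B. lt x y \<longrightarrow> lt y z \<longrightarrow> lt x z) \<and>
     (\<forall>x\<in>B. \<forall>y\<in>B. x \<noteq> y \<longrightarrow> lt x y \<or> lt y x)"

text \<open>Extension to B^n, most significant letter on the right (indices 0-based).\<close>

definition revlex_less :: "('b \<Rightarrow> 'b \<Rightarrow> bool) \<Rightarrow> 'b list \<Rightarrow> 'b list \<Rightarrow> bool" where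
  "revlex_less lt u v \<longleftrightarrow> length u = length v \<and>
     (\<exists>i<length u. lt (u ! i) (v ! i) \<and> (\<forall>j. i < j \<and> j < length u \<longrightarrow> u ! j = v ! j))"

definition words :: "'b set \<Rightarrow> nat \<Rightarrow> 'b list set" where
  "words B n = {w. length w = n \<and> set w \<subseteq> B}"

definition enum_words :: "'b set \<Rightarrow> ('b \<Rightarrow> 'b \<Rightarrow> bool) \<Rightarrow> nat \<Rightarrow> 'b list list" where
  "enum_words B lt n = (THE bs. sorted_wrt (revlex_less lt) bs \<and> set bs = words B n)"

definition tensor :: "('a, 'b) ltr list \<Rightarrow> 'b list \<Rightarrow> ('a, 'b) ltr list" where
  "tensor u b = map2 Ext u b"

definition ext_alph :: "('a, 'b) ltr set \<Rightarrow> 'b set \<Rightarrow> ('a, 'b) ltr set" where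
  "ext_alph Sig B = {Ext s b | s b. s \<in> Sig \<and> b \<in> B}"

definition maplex :: "('a, 'b) ltr set \<Rightarrow> 'b set \<Rightarrow> ('b \<Rightarrow> 'b \<Rightarrow> bool)
     \<Rightarrow> (('a, 'b) ltr list \<Rightarrow> 'g list option) \<Rightarrow> ('a, 'b) ltr list \<Rightarrow> 'g list option" where
  "maplex Sig B lt f u =
     (let rs = map (\<lambda>b. f (tensor u b)) (enum_words B lt (length u))
      in if u \<in> lists Sig \<and> None \<notin> set rs then Some (concat (map the rs)) else None)"

inductive lex :: "nat \<Rightarrow> ('a, 'b) ltr set \<Rightarrow> 'g set \<Rightarrow> (('a, 'b) ltr list \<Rightarrow> 'g list option) \<Rightarrow> bool" where
  lex0: "simple_trans Sig Gamma f \<Longrightarrow> lex 0 Sig Gamma f"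
| lexSuc: "finite B \<Longrightarrow> strict_linear_on B lt \<Longrightarrow> lex k (ext_alph Sig B) Gamma f
            \<Longrightarrow> lex (Suc k) Sig Gamma (maplex Sig B lt f)"

end

theory Submission
  imports Defs "HOL-Library.FuncSet"
begin

text \<open>Fix a DFA for \<open>L\<close>. A word acts on its states by a relation; these relations form a
finite monoid under composition, to which an undefined output contributes the absorbing element
\<open>{}\<close>. It therefore suffices to show that the action of \<open>f u\<close> is computed from \<open>u\<close> by a finite
automaton with outputs in this monoid. For simple transductions this is a product of automata
for the languages \<open>L\<^sub>i\<close>. For \<open>maplex\<close>, let \<open>g\<close> be computed over the extended alphabet by an
automaton with states \<open>Q\<close> and transitions \<open>\<delta>\<close>. After reading \<open>u\<close>, remember the map sending
each \<open>\<phi> : Q \<rightarrow> M\<close> to \<open>q \<mapsto> \<Prod>\<^sub>b \<phi> (\<delta> q (u \<otimes> b))\<close>, the product being taken over all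
\<open>b\<close> of length \<open>|u|\<close> in increasing order. There are finitely many such maps, and they can be
updated letter by letter: as the last letter of \<open>b\<close> is the most significant, the product for
\<open>u a\<close> is the product over \<open>c \<in> B\<close> of the products for \<open>u\<close> with \<open>\<phi>\<close> replaced by
\<open>\<phi> (\<delta> - (a, c))\<close>.\<close>

section \<open>Reverse-lexicographic enumeration of words\<close>

lemma sorted_wrt_unique:
  assumes "sorted_wrt R xs" "sorted_wrt R ys" "set xs = set ys"
    and "\<And>x y. x \<in> set xs \<Longrightarrow> y \<in> set xs \<Longrightarrow> R x y \<Longrightarrow> \<not> R y x"
  shows "xs = ys"
  using assms
proof (induction xs arbitrary: ys)
  case Nil
  then show ?case by simp
next
  case (Cons x xs)
  obtain y ys' where ys: "ys = y # ys'" using Cons.prems(3) by (cases ys) auto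
  have asym: "\<not> R b a" if "a \<in> set (x # xs)" "b \<in> set (x # xs)" "R a b" for a b
    using Cons.prems(4) that by blast
  have "x = y"
  proof (rule ccontr)
    assume "x \<noteq> y"
    then have "y \<in> set xs" "x \<in> set ys'" using Cons.prems(3) ys by auto
    then have "R x y" "R y x" using Cons.prems(1,2) ys by auto
    then show False using asym \<open>y \<in> set xs\<close> by simp
  qed
  have "\<not> R x x" using asym[of x x] by auto
  then have "x \<notin> set xs" "y \<notin> set ys'" using Cons.prems(1,2) ys \<open>x = y\<close> by auto
  then have "set xs = set ys'" using Cons.prems(3) ys \<open>x = y\<close> by auto
  moreover have "sorted_wrt R xs" "sorted_wrt R ys'" using Cons.prems(1,2) ys by auto
  ultimately have "xs = ys'" using Cons.IH asym by (meson list.set_intros(2))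
  with \<open>x = y\<close> ys show ?case by simp
qed

lemma ex_sorted_wrt_list:
  assumes "strict_linear_on B lt" "finite S" "S \<subseteq> B"
  shows "\<exists>xs. sorted_wrt lt xs \<and> set xs = S"
  using assms(2,3)
proof (induction S rule: finite_induct)
  case empty
  then show ?case by auto
next
  case (insert x S)
  then obtain xs where xs: "sorted_wrt lt xs" "set xs = S" by auto
  have trans_B: "\<forall>x\<in>B. \<forall>y\<in>B. \<forall>z\<in>B. lt x y \<longrightarrow> lt y z \<longrightarrow> lt x z"
    and total_B: "\<forall>x\<in>B. \<forall>y\<in>B. x \<noteq> y \<longrightarrow> lt x y \<or> lt y x"
    using assms(1) unfolding strict_linear_on_def by blast+
  have x_B: "x \<in> B" and S_B: "S \<subseteq> B" using insert.prems by auto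
  have trans: "\<forall>y\<in>S. \<forall>z\<in>S. lt y x \<longrightarrow> lt x z \<longrightarrow> lt y z"
    using trans_B x_B S_B by (meson subsetD)
  have total: "\<forall>y\<in>S. lt y x \<or> lt x y"
    using total_B x_B S_B insert.hyps(2) by (metis subsetD)
  let ?ys = "filter (\<lambda>y. lt y x) xs @ x # filter (\<lambda>y. lt x y) xs"
  have "\<forall>y\<in>set (filter (\<lambda>y. lt y x) xs). \<forall>z\<in>set (x # filter (\<lambda>y. lt x y) xs). lt y z"
    unfolding set_filter list.set xs(2) using trans by blast
  then have "sorted_wrt lt ?ys"
    using xs(1) by (simp add: sorted_wrt_append sorted_wrt_filter)
  moreover have "set ?ys = insert x S" using xs(2) total by auto
  ultimately show ?case by blast
qed

fun revlex_words :: "'b list \<Rightarrow> nat \<Rightarrow> 'b list list" where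
  "revlex_words cs 0 = [[]]"
| "revlex_words cs (Suc n) = concat (map (\<lambda>c. map (\<lambda>w. w @ [c]) (revlex_words cs n)) cs)"

lemma set_revlex_words: "set (revlex_words cs n) = words (set cs) n"
proof (induction n)
  case 0
  then show ?case by (auto simp: words_def)
next
  case (Suc n)
  have "words (set cs) (Suc n) = (\<lambda>(w, c). w @ [c]) ` (words (set cs) n \<times> set cs)"
  proof (intro equalityI subsetI)
    fix w assume w: "w \<in> words (set cs) (Suc n)"
    then have "w \<noteq> []" by (auto simp: words_def)
    then have "w = butlast w @ [last w]" by simp
    moreover have "butlast w \<in> words (set cs) n" "last w \<in> set cs"
      using w \<open>w \<noteq> []\<close> by (auto simp: words_def dest: in_set_butlastD)
    ultimately show "w \<in> (\<lambda>(w, c). w @ [c]) ` (words (set cs) n \<times> set cs)"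
      by (metis (no_types, lifting) SigmaI case_prod_conv image_eqI)
  qed (auto simp: words_def)
  with Suc show ?case by auto
qed

lemma length_revlex_words: "w \<in> set (revlex_words cs n) \<Longrightarrow> length w = n"
  by (simp add: set_revlex_words words_def)

lemma revlex_less_snoc_iff:
  assumes "length v = length w" "\<not> lt c c"
  shows "revlex_less lt (v @ [c]) (w @ [c]) \<longleftrightarrow> revlex_less lt v w"
proof
  assume "revlex_less lt (v @ [c]) (w @ [c])"
  then obtain i where i: "i < Suc (length v)" "lt ((v @ [c]) ! i) ((w @ [c]) ! i)"
    "\<forall>j. i < j \<and> j < Suc (length v) \<longrightarrow> (v @ [c]) ! j = (w @ [c]) ! j"
    unfolding revlex_less_def by auto
  have "i < length v" using i(1,2) assms by (cases "i = length v") (auto simp: nth_append)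
  then show "revlex_less lt v w" unfolding revlex_less_def using i assms
    by (auto simp: nth_append) (metis less_Suc_eq)
next
  assume "revlex_less lt v w"
  then obtain i where "i < length v" "lt (v ! i) (w ! i)"
    "\<forall>j. i < j \<and> j < length v \<longrightarrow> v ! j = w ! j"
    unfolding revlex_less_def by auto
  then show "revlex_less lt (v @ [c]) (w @ [c])" unfolding revlex_less_def
    using assms by (intro conjI exI[of _ i]) (auto simp: nth_append)
qed

lemma revlex_less_snoc:
  "length v = length w \<Longrightarrow> lt c d \<Longrightarrow> revlex_less lt (v @ [c]) (w @ [d])"
  unfolding revlex_less_def by (intro conjI exI[of _ "length v"]) (auto simp: nth_append)

lemma sorted_revlex_words:
  assumes "sorted_wrt lt cs" "\<And>c. c \<in> set cs \<Longrightarrow> \<not> lt c c"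
  shows "sorted_wrt (revlex_less lt) (revlex_words cs n)"
proof (induction n)
  case 0
  then show ?case by simp
next
  case (Suc n)
  have block: "sorted_wrt (revlex_less lt) (map (\<lambda>w. w @ [c]) (revlex_words cs n))"
    if "c \<in> set cs" for c
    unfolding sorted_wrt_map using Suc
    by (rule sorted_wrt_mono_rel[rotated])
      (use that assms(2) in \<open>auto simp: revlex_less_snoc_iff length_revlex_words\<close>)
  have "sorted_wrt (revlex_less lt) (concat (map (\<lambda>c. map (\<lambda>w. w @ [c]) (revlex_words cs n)) ds))"
    if "sorted_wrt lt ds" "set ds \<subseteq> set cs" for ds
    using that
    by (induction ds)
      (auto simp: sorted_wrt_append length_revlex_words block intro!: revlex_less_snoc)
  then show ?case using assms(1) by simp
qed

lemma revlex_less_asym: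
  assumes "strict_linear_on B lt" "v \<in> words B n" "w \<in> words B n" "revlex_less lt v w"
  shows "\<not> revlex_less lt w v"
proof
  assume "revlex_less lt w v"
  then obtain j where j: "j < n" "lt (w ! j) (v ! j)" "\<forall>k. j < k \<and> k < n \<longrightarrow> w ! k = v ! k"
    using assms(3) unfolding revlex_less_def words_def by auto
  obtain i where i: "i < n" "lt (v ! i) (w ! i)" "\<forall>k. i < k \<and> k < n \<longrightarrow> v ! k = w ! k"
    using assms(2,4) unfolding revlex_less_def words_def by auto
  have in_B: "v ! k \<in> B" "w ! k \<in> B" if "k < n" for k
    using assms(2,3) that by (auto simp: words_def)
  have irrefl: "\<And>x. x \<in> B \<Longrightarrow> \<not> lt x x"
    and trans: "\<And>x y z. x \<in> B \<Longrightarrow> y \<in> B \<Longrightarrow> z \<in> B \<Longrightarrow> lt x y \<Longrightarrow> lt y z \<Longrightarrow> lt x z"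
    using assms(1) unfolding strict_linear_on_def by blast+
  consider "i < j" | "j < i" | "i = j" by linarith
  then show False
  proof cases
    case 1
    then show False using i(3) j(1,2) in_B irrefl by force
  next
    case 2
    then show False using j(3) i(1,2) in_B irrefl by force
  next
    case 3
    then show False using i(1,2) j(2) in_B irrefl trans by blast
  qed
qed

lemma enum_words_eq_revlex_words:
  assumes "strict_linear_on B lt" "sorted_wrt lt cs" "set cs = B"
  shows "enum_words B lt n = revlex_words cs n"
  unfolding enum_words_def
proof (rule the_equality)
  have "\<And>c. c \<in> set cs \<Longrightarrow> \<not> lt c c" using assms unfolding strict_linear_on_def by auto
  then have sorted: "sorted_wrt (revlex_less lt) (revlex_words cs n)"
    using sorted_revlex_words[OF assms(2)] by blast
  then show "sorted_wrt (revlex_less lt) (revlex_words cs n) \<and> set (revlex_words cs n) = words B n"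
    using set_revlex_words assms(3) by auto
  fix ws assume ws: "sorted_wrt (revlex_less lt) ws \<and> set ws = words B n"
  show "ws = revlex_words cs n"
  proof (rule sorted_wrt_unique[of "revlex_less lt"])
    show "set ws = set (revlex_words cs n)" using ws assms(3) by (simp add: set_revlex_words)
    show "\<And>v w. v \<in> set ws \<Longrightarrow> w \<in> set ws \<Longrightarrow> revlex_less lt v w \<Longrightarrow> \<not> revlex_less lt w v"
      using ws revlex_less_asym[OF assms(1)] by blast
  qed (use ws sorted in auto)
qed

section \<open>Functions computed by finite automata\<close>

definition dfa_computable :: "'c set \<Rightarrow> 'm set \<Rightarrow> ('c list \<Rightarrow> 'm) \<Rightarrow> bool" where
  "dfa_computable Sig M g \<longleftrightarrow> (\<exists>(Q :: nat set) q0 \<delta> out. finite Q \<and> q0 \<in> Q \<and>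
     (\<forall>q\<in>Q. \<forall>a\<in>Sig. \<delta> q a \<in> Q) \<and> (\<forall>q\<in>Q. out q \<in> M) \<and>
     (\<forall>u\<in>lists Sig. g u = out (fold (\<lambda>a q. \<delta> q a) u q0)))"

lemma fold_closed:
  assumes "\<And>q a. q \<in> Q \<Longrightarrow> a \<in> Sig \<Longrightarrow> \<delta> q a \<in> Q" "q \<in> Q" "u \<in> lists Sig"
  shows "fold (\<lambda>a q. \<delta> q a) u q \<in> Q"
  using assms(2,3) by (induction u arbitrary: q) (auto intro: assms(1))

lemma dfa_computableE:
  assumes "dfa_computable Sig M g"
  obtains Q :: "nat set" and q0 \<delta> out
  where "finite Q" "q0 \<in> Q" "\<And>q a. q \<in> Q \<Longrightarrow> a \<in> Sig \<Longrightarrow> \<delta> q a \<in> Q"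
    "\<And>q. q \<in> Q \<Longrightarrow> out q \<in> M" "\<And>u. u \<in> lists Sig \<Longrightarrow> g u = out (fold (\<lambda>a q. \<delta> q a) u q0)"
proof -
  from assms obtain Q :: "nat set" and q0 \<delta> out where "finite Q" "q0 \<in> Q"
    "\<forall>q\<in>Q. \<forall>a\<in>Sig. \<delta> q a \<in> Q" "\<forall>q\<in>Q. out q \<in> M"
    "\<forall>u\<in>lists Sig. g u = out (fold (\<lambda>a q. \<delta> q a) u q0)"
    unfolding dfa_computable_def by blast
  then show thesis by (intro that) auto
qed

lemma dfa_computableI:
  fixes Q :: "'s set"
  assumes "finite Q" "init \<in> Q" "\<And>q a. q \<in> Q \<Longrightarrow> a \<in> Sig \<Longrightarrow> \<delta> q a \<in> Q"
    and "\<And>q. q \<in> Q \<Longrightarrow> out q \<in> M"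
    and "\<And>u. u \<in> lists Sig \<Longrightarrow> g u = out (fold (\<lambda>a q. \<delta> q a) u init)"
  shows "dfa_computable Sig M g"
proof -
  obtain e :: "'s \<Rightarrow> nat" where e: "inj_on e Q"
    using finite_imp_inj_to_nat_seg[OF assms(1)] by blast
  define d where "d = inv_into Q e"
  have d_e: "d (e q) = q" if "q \<in> Q" for q using e that by (simp add: d_def)
  have run: "fold (\<lambda>a n. e (\<delta> (d n) a)) u (e q) = e (fold (\<lambda>a q. \<delta> q a) u q)"
    if "q \<in> Q" "u \<in> lists Sig" for u q
    using that by (induction u arbitrary: q) (auto simp: d_e assms(3))
  show ?thesis unfolding dfa_computable_def
  proof (intro exI conjI ballI)
    show "finite (e ` Q)" "e init \<in> e ` Q" using assms(1,2) by auto
    show "e (\<delta> (d n) a) \<in> e ` Q" if "n \<in> e ` Q" "a \<in> Sig" for n a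
      using that assms(3) d_e by auto
    show "out (d n) \<in> M" if "n \<in> e ` Q" for n
      using that assms(4) d_e by auto
    show "g u = out (d (fold (\<lambda>a n. e (\<delta> (d n) a)) u (e init)))" if "u \<in> lists Sig" for u
      using that assms(2,5) run fold_closed[where \<delta> = \<delta>, OF assms(3,2) that] by (simp add: d_e)
  qed
qed

lemma dfa_computable_cong:
  assumes "dfa_computable Sig M g" "\<And>u. u \<in> lists Sig \<Longrightarrow> g u = h u"
  shows "dfa_computable Sig M h"
  using assms unfolding dfa_computable_def by auto

lemma dfa_computable_comp:
  assumes "dfa_computable Sig M g" "\<And>x. x \<in> M \<Longrightarrow> h x \<in> N"
  shows "dfa_computable Sig N (\<lambda>u. h (g u))"
  using assms(1)
proof (rule dfa_computableE)
  fix Q :: "nat set" and q0 \<delta> out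
  assume "finite Q" "q0 \<in> Q" "\<And>q a. q \<in> Q \<Longrightarrow> a \<in> Sig \<Longrightarrow> \<delta> q a \<in> Q"
    "\<And>q. q \<in> Q \<Longrightarrow> out q \<in> M" "\<And>u. u \<in> lists Sig \<Longrightarrow> g u = out (fold (\<lambda>a q. \<delta> q a) u q0)"
  then show ?thesis using assms(2) by (intro dfa_computableI[where out = "\<lambda>q. h (out q)"]) auto
qed

lemma regular_imp_dfa_computable:
  assumes "regular Sig L"
  shows "dfa_computable Sig UNIV (\<lambda>u. u \<in> L)"
proof -
  obtain Q :: "nat set" and q0 \<delta> F where "finite Q" "q0 \<in> Q" "\<forall>q\<in>Q. \<forall>a\<in>Sig. \<delta> q a \<in> Q"
    and L: "L = {w \<in> lists Sig. fold (\<lambda>a q. \<delta> q a) w q0 \<in> F}"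
    using assms unfolding regular_def by blast
  then show ?thesis by (intro dfa_computableI[where out = "\<lambda>q. q \<in> F"]) auto
qed

lemma regular_if_dfa_computable:
  assumes "finite Sig" "dfa_computable Sig M g"
  shows "regular Sig {u \<in> lists Sig. P (g u)}"
  using assms(2)
proof (rule dfa_computableE)
  fix Q :: "nat set" and q0 \<delta> out
  assume Q: "finite Q" "q0 \<in> Q" and \<delta>: "\<And>q a. q \<in> Q \<Longrightarrow> a \<in> Sig \<Longrightarrow> \<delta> q a \<in> Q"
    and g: "\<And>u. u \<in> lists Sig \<Longrightarrow> g u = out (fold (\<lambda>a q. \<delta> q a) u q0)"
  have "P (g u) \<longleftrightarrow> fold (\<lambda>a q. \<delta> q a) u q0 \<in> {q \<in> Q. P (out q)}" if "u \<in> lists Sig" for u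
    using g[OF that] fold_closed[where \<delta> = \<delta>, OF \<delta> Q(2) that] by simp
  then have "{u \<in> lists Sig. P (g u)} = {u \<in> lists Sig. fold (\<lambda>a q. \<delta> q a) u q0 \<in> {q \<in> Q. P (out q)}}"
    by blast
  then show ?thesis unfolding regular_def using assms(1) Q \<delta>
    by (intro conjI exI[of _ Q] exI[of _ q0] exI[of _ \<delta>] exI[of _ "{q \<in> Q. P (out q)}"]) auto
qed

lemma dfa_computable_PiE:
  assumes "finite I" "\<And>i. i \<in> I \<Longrightarrow> dfa_computable Sig (M i) (g i)"
  shows "dfa_computable Sig (\<Pi>\<^sub>E i\<in>I. M i) (\<lambda>u. \<lambda>i\<in>I. g i u)"
proof -
  define machine where "machine i Q q0 \<delta> out \<longleftrightarrow> finite Q \<and> q0 \<in> Q \<and>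
     (\<forall>q\<in>Q. \<forall>a\<in>Sig. \<delta> q a \<in> Q) \<and> (\<forall>q\<in>Q. out q \<in> M i) \<and>
     (\<forall>u\<in>lists Sig. g i u = out (fold (\<lambda>a q. \<delta> q a) u q0))"
    for i and Q :: "nat set" and q0 \<delta> out
  have "\<forall>i\<in>I. \<exists>Q q0 \<delta> out. machine i Q q0 \<delta> out"
    using assms(2) unfolding dfa_computable_def machine_def by simp
  then obtain Q q0 \<delta> out where "\<forall>i\<in>I. machine i (Q i) (q0 i) (\<delta> i) (out i)"
    by metis
  then have A: "finite (Q i)" "q0 i \<in> Q i" "\<forall>q\<in>Q i. \<forall>a\<in>Sig. \<delta> i q a \<in> Q i"
      "\<forall>q\<in>Q i. out i q \<in> M i" "\<forall>u\<in>lists Sig. g i u = out i (fold (\<lambda>a q. \<delta> i q a) u (q0 i))"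
    if "i \<in> I" for i
    using that unfolding machine_def by blast+
  have run: "fold (\<lambda>a s. \<lambda>i\<in>I. \<delta> i (s i) a) u (restrict p I) = (\<lambda>i\<in>I. fold (\<lambda>a q. \<delta> i q a) u (p i))"
    for u p
  proof (induction u arbitrary: p)
    case (Cons a u)
    have "(\<lambda>i\<in>I. \<delta> i (restrict p I i) a) = restrict (\<lambda>i. \<delta> i (p i) a) I"
      by (rule restrict_ext) simp
    then show ?case using Cons.IH by (simp add: fun_eq_iff)
  qed simp
  show ?thesis
  proof (rule dfa_computableI[where Q = "\<Pi>\<^sub>E i\<in>I. Q i" and init = "restrict q0 I"
        and \<delta> = "\<lambda>s a. \<lambda>i\<in>I. \<delta> i (s i) a" and out = "\<lambda>s. \<lambda>i\<in>I. out i (s i)"])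
    show "finite (\<Pi>\<^sub>E i\<in>I. Q i)" using assms(1) A(1) by (intro finite_PiE) auto
    show "restrict q0 I \<in> (\<Pi>\<^sub>E i\<in>I. Q i)" using A(2) by simp
    show "(\<lambda>i\<in>I. \<delta> i (s i) a) \<in> (\<Pi>\<^sub>E i\<in>I. Q i)" if "s \<in> (\<Pi>\<^sub>E i\<in>I. Q i)" "a \<in> Sig" for s a
      using that A(3) by (auto simp: PiE_iff)
    show "(\<lambda>i\<in>I. out i (s i)) \<in> (\<Pi>\<^sub>E i\<in>I. M i)" if "s \<in> (\<Pi>\<^sub>E i\<in>I. Q i)" for s
      using that A(4) by (auto simp: PiE_iff)
    show "(\<lambda>i\<in>I. g i u) = (\<lambda>i\<in>I. out i (fold (\<lambda>a s. \<lambda>i\<in>I. \<delta> i (s i) a) u (restrict q0 I) i))"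
      if "u \<in> lists Sig" for u
      using A(5) that by (intro restrict_ext) (simp add: run del: in_listsI)
  qed
qed

section \<open>Lexicographic products\<close>

lemma tensor_in_lists:
  assumes "u \<in> lists Sig" "set b \<subseteq> B"
  shows "tensor u b \<in> lists (ext_alph Sig B)"
  unfolding in_lists_conv_set
proof
  fix x assume "x \<in> set (tensor u b)"
  then obtain s c where "(s, c) \<in> set (zip u b)" "x = Ext s c"
    unfolding tensor_def by auto
  then show "x \<in> ext_alph Sig B"
    using assms unfolding ext_alph_def by (auto dest: set_zip_leftD set_zip_rightD)
qed

lemma tensor_snoc: "length b = length u \<Longrightarrow> tensor (u @ [a]) (b @ [c]) = tensor u b @ [Ext a c]"
  by (simp add: tensor_def)

context monoid_list
begin

lemma F_concat: "F (concat xss) = F (map F xss)"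
  by (induction xss) simp_all

lemma F_closed:
  assumes "\<And>x y. x \<in> M \<Longrightarrow> y \<in> M \<Longrightarrow> x \<^bold>* y \<in> M" "\<^bold>1 \<in> M" "set xs \<subseteq> M"
  shows "F xs \<in> M"
  using assms(3) by (induction xs) (simp_all add: assms(1,2))

end

text \<open>The automaton for the lexicographic product of the function computed by \<open>(Q, q0, \<delta>, out)\<close>;
\<open>cs\<close> lists the ordered alphabet \<open>B\<close> increasingly, and \<open>state u\<close> is the map described at the top.\<close>

locale lex_product = monoid_list +
  fixes Sig :: "('c, 'b) ltr set" and cs :: "'b list" and M :: "'a set"
    and Q :: "nat set" and q0 :: nat and \<delta> :: "nat \<Rightarrow> ('c, 'b) ltr \<Rightarrow> nat" and out :: "nat \<Rightarrow> 'a"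
  assumes finite_M: "finite M"
    and mult_closed: "\<And>x y. x \<in> M \<Longrightarrow> y \<in> M \<Longrightarrow> x \<^bold>* y \<in> M" and one_in_M: "\<^bold>1 \<in> M"
    and finite_Q: "finite Q" and q0_in_Q: "q0 \<in> Q"
    and \<delta>_closed: "\<And>q a. q \<in> Q \<Longrightarrow> a \<in> ext_alph Sig (set cs) \<Longrightarrow> \<delta> q a \<in> Q"
    and out_in_M: "\<And>q. q \<in> Q \<Longrightarrow> out q \<in> M"
begin

definition run :: "nat \<Rightarrow> ('c, 'b) ltr list \<Rightarrow> nat" where
  "run q w = fold (\<lambda>a q. \<delta> q a) w q"

definition weight :: "('c, 'b) ltr list \<Rightarrow> (nat \<Rightarrow> 'a) \<Rightarrow> nat \<Rightarrow> 'a" where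
  "weight u \<phi> q = F (map (\<lambda>b. \<phi> (run q (tensor u b))) (revlex_words cs (length u)))"

lemma run_in_Q: "q \<in> Q \<Longrightarrow> w \<in> lists (ext_alph Sig (set cs)) \<Longrightarrow> run q w \<in> Q"
  unfolding run_def by (rule fold_closed[where \<delta> = \<delta>, OF \<delta>_closed])

lemma tensor_revlex_word_in_lists:
  "u \<in> lists Sig \<Longrightarrow> b \<in> set (revlex_words cs (length u)) \<Longrightarrow> tensor u b \<in> lists (ext_alph Sig (set cs))"
  by (rule tensor_in_lists) (simp_all add: set_revlex_words words_def)

lemma weight_snoc:
  "weight (u @ [a]) \<phi> q = F (map (\<lambda>c. weight u (\<lambda>p. \<phi> (\<delta> p (Ext a c))) q) cs)"
proof -
  have "weight (u @ [a]) \<phi> q = F (map (\<lambda>c. F (map (\<lambda>b. \<phi> (run q (tensor (u @ [a]) (b @ [c]))))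
      (revlex_words cs (length u)))) cs)"
    by (simp add: weight_def map_concat F_concat comp_def)
  also have "\<dots> = F (map (\<lambda>c. weight u (\<lambda>p. \<phi> (\<delta> p (Ext a c))) q) cs)"
    unfolding weight_def
    by (intro arg_cong[where f = F] map_cong refl) (simp add: tensor_snoc length_revlex_words run_def)
  finally show ?thesis .
qed

lemma weight_cong:
  assumes "u \<in> lists Sig" "q \<in> Q" "\<And>p. p \<in> Q \<Longrightarrow> \<phi> p = \<psi> p"
  shows "weight u \<phi> q = weight u \<psi> q"
  unfolding weight_def
  by (intro arg_cong[where f = F] map_cong refl)
    (simp add: assms run_in_Q tensor_revlex_word_in_lists)

lemma weight_in_M:
  assumes "u \<in> lists Sig" "q \<in> Q" "\<And>p. p \<in> Q \<Longrightarrow> \<phi> p \<in> M"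
  shows "weight u \<phi> q \<in> M"
  unfolding weight_def using mult_closed one_in_M
  by (rule F_closed) (auto simp: assms run_in_Q tensor_revlex_word_in_lists)

definition weightings :: "(nat \<Rightarrow> 'a) set" where
  "weightings = Q \<rightarrow>\<^sub>E M"

abbreviation states :: "((nat \<Rightarrow> 'a) \<Rightarrow> nat \<Rightarrow> 'a) set" where
  "states \<equiv> weightings \<rightarrow>\<^sub>E weightings"

definition state :: "('c, 'b) ltr list \<Rightarrow> (nat \<Rightarrow> 'a) \<Rightarrow> nat \<Rightarrow> 'a" where
  "state u = (\<lambda>\<phi>\<in>weightings. \<lambda>q\<in>Q. weight u \<phi> q)"

definition step :: "((nat \<Rightarrow> 'a) \<Rightarrow> nat \<Rightarrow> 'a) \<Rightarrow> ('c, 'b) ltr \<Rightarrow> (nat \<Rightarrow> 'a) \<Rightarrow> nat \<Rightarrow> 'a" where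
  "step S a = (\<lambda>\<phi>\<in>weightings. \<lambda>q\<in>Q. F (map (\<lambda>c. S (\<lambda>p\<in>Q. \<phi> (\<delta> p (Ext a c))) q) cs))"

lemma shift_in_weightings:
  assumes "\<phi> \<in> weightings" "a \<in> Sig" "c \<in> set cs"
  shows "(\<lambda>p\<in>Q. \<phi> (\<delta> p (Ext a c))) \<in> weightings"
proof -
  have "Ext a c \<in> ext_alph Sig (set cs)" using assms(2,3) by (auto simp: ext_alph_def)
  then show ?thesis using assms(1) \<delta>_closed by (auto simp: weightings_def)
qed

lemma state_in_states: "u \<in> lists Sig \<Longrightarrow> state u \<in> states"
  by (auto simp: state_def weightings_def intro!: weight_in_M)

lemma step_in_states:
  assumes "S \<in> states" "a \<in> Sig"
  shows "step S a \<in> states"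
proof -
  have "S (\<lambda>p\<in>Q. \<phi> (\<delta> p (Ext a c))) q \<in> M"
    if "\<phi> \<in> weightings" "c \<in> set cs" "q \<in> Q" for \<phi> c q
    using assms(1) shift_in_weightings[OF that(1) assms(2) that(2)] that(3)
    unfolding weightings_def by (metis PiE_mem)
  then show ?thesis
    using mult_closed one_in_M by (auto simp: step_def weightings_def intro!: F_closed)
qed

lemma step_state:
  assumes "u \<in> lists Sig" "a \<in> Sig"
  shows "step (state u) a = state (u @ [a])"
  unfolding step_def state_def
proof (intro restrict_ext)
  fix \<phi> q assume \<phi>: "\<phi> \<in> weightings" and q: "q \<in> Q"
  have "(\<lambda>\<phi>\<in>weightings. \<lambda>q\<in>Q. weight u \<phi> q) (\<lambda>p\<in>Q. \<phi> (\<delta> p (Ext a c))) q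
      = weight u (\<lambda>p. \<phi> (\<delta> p (Ext a c))) q" if "c \<in> set cs" for c
  proof -
    have "(\<lambda>\<phi>\<in>weightings. \<lambda>q\<in>Q. weight u \<phi> q) (\<lambda>p\<in>Q. \<phi> (\<delta> p (Ext a c))) q
        = weight u (\<lambda>p\<in>Q. \<phi> (\<delta> p (Ext a c))) q"
      using shift_in_weightings[OF \<phi> assms(2) that] q by simp
    also have "\<dots> = weight u (\<lambda>p. \<phi> (\<delta> p (Ext a c))) q"
      by (rule weight_cong[OF assms(1) q]) simp
    finally show ?thesis .
  qed
  then show "F (map (\<lambda>c. (\<lambda>\<phi>\<in>weightings. \<lambda>q\<in>Q. weight u \<phi> q) (\<lambda>p\<in>Q. \<phi> (\<delta> p (Ext a c))) q) cs)
      = weight (u @ [a]) \<phi> q"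
    by (simp add: weight_snoc cong: map_cong)
qed

lemma fold_step_state: "u \<in> lists Sig \<Longrightarrow> fold (\<lambda>a S. step S a) u (state []) = state u"
proof (induction u rule: rev_induct)
  case (snoc a u)
  then show ?case by (simp add: step_state)
qed simp

lemma state_apply_out: "u \<in> lists Sig \<Longrightarrow> state u (restrict out Q) q0 = weight u out q0"
  using out_in_M q0_in_Q
  by (simp add: state_def weightings_def weight_cong[of u q0 "restrict out Q" out])

lemma dfa_computable_weight: "dfa_computable Sig M (\<lambda>u. weight u out q0)"
proof (rule dfa_computableI[where Q = states and init = "state []"
      and \<delta> = step and out = "\<lambda>S. S (restrict out Q) q0"])
  show "finite states"
    using finite_Q finite_M by (simp add: weightings_def finite_PiE)
  have "restrict out Q \<in> weightings" using out_in_M by (simp add: weightings_def)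
  then show "S (restrict out Q) q0 \<in> M" if "S \<in> states" for S
    using that q0_in_Q unfolding weightings_def by (metis PiE_mem)
qed (simp_all add: state_in_states step_in_states fold_step_state state_apply_out)

end

context monoid_list
begin

lemma dfa_computable_lex_product:
  assumes "finite B" "strict_linear_on B lt"
    and "finite M" "\<And>x y. x \<in> M \<Longrightarrow> y \<in> M \<Longrightarrow> x \<^bold>* y \<in> M" "\<^bold>1 \<in> M"
    and "dfa_computable (ext_alph Sig B) M g"
  shows "dfa_computable Sig M (\<lambda>u. F (map (\<lambda>b. g (tensor u b)) (enum_words B lt (length u))))"
proof -
  obtain cs where cs: "sorted_wrt lt cs" "set cs = B"
    using ex_sorted_wrt_list[OF assms(2,1) order.refl] by blast
  obtain Q :: "nat set" and q0 \<delta> out where Q: "finite Q" "q0 \<in> Q"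
    and \<delta>: "\<And>q a. q \<in> Q \<Longrightarrow> a \<in> ext_alph Sig B \<Longrightarrow> \<delta> q a \<in> Q"
    and out: "\<And>q. q \<in> Q \<Longrightarrow> out q \<in> M"
    and g: "\<And>w. w \<in> lists (ext_alph Sig B) \<Longrightarrow> g w = out (fold (\<lambda>a q. \<delta> q a) w q0)"
    by (rule dfa_computableE[OF assms(6)], rule that)
  interpret lex_product f z Sig cs M Q q0 \<delta> out
    by unfold_locales (use assms(3-5) Q \<delta> out cs(2) in auto)
  show ?thesis
  proof (rule dfa_computable_cong[OF dfa_computable_weight])
    fix u assume u: "u \<in> lists Sig"
    have "out (run q0 (tensor u b)) = g (tensor u b)" if "b \<in> set (revlex_words cs (length u))" for b
      using g tensor_revlex_word_in_lists[OF u that] cs(2) by (simp add: run_def)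
    then show "weight u out q0 = F (map (\<lambda>b. g (tensor u b)) (enum_words B lt (length u)))"
      unfolding weight_def enum_words_eq_revlex_words[OF assms(2) cs] by (simp cong: map_cong)
  qed
qed

end

section \<open>Transition relations\<close>

text \<open>The action of a word, extended by the identity outside \<open>Q\<close> so that the empty word acts as
the unit \<open>Id\<close> of relational composition.\<close>

definition run_rel :: "nat set \<Rightarrow> (nat \<Rightarrow> 'g \<Rightarrow> nat) \<Rightarrow> 'g list \<Rightarrow> nat rel" where
  "run_rel Q \<delta> v = {(q, fold (\<lambda>a q. \<delta> q a) v q) | q. q \<in> Q} \<union> Id_on (- Q)"

definition run_rels :: "nat set \<Rightarrow> nat rel set" where
  "run_rels Q = insert {} ((\<lambda>R. R \<union> Id_on (- Q)) ` Pow (Q \<times> Q))"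

interpretation relcomp_list: monoid_list relcomp Id
  by unfold_locales (simp_all add: O_assoc)

lemma finite_run_rels: "finite Q \<Longrightarrow> finite (run_rels Q)"
  by (simp add: run_rels_def)

lemma relcomp_in_run_rels:
  assumes "R \<in> run_rels Q" "S \<in> run_rels Q"
  shows "R O S \<in> run_rels Q"
proof -
  have "(R' \<union> Id_on (- Q)) O (S' \<union> Id_on (- Q)) = R' O S' \<union> Id_on (- Q)"
    if "R' \<subseteq> Q \<times> Q" "S' \<subseteq> Q \<times> Q" for R' S'
    using that by blast
  then show ?thesis using assms unfolding run_rels_def by (auto 0 4 intro!: imageI)
qed

lemma Id_in_run_rels: "Id \<in> run_rels Q"
proof -
  have "Id = Id_on Q \<union> Id_on (- Q)" by auto
  then show ?thesis unfolding run_rels_def by (blast intro: Id_on_subset_Times)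
qed

lemma run_rel_in_run_rels:
  assumes "\<And>q a. q \<in> Q \<Longrightarrow> a \<in> Gamma \<Longrightarrow> \<delta> q a \<in> Q" "v \<in> lists Gamma"
  shows "run_rel Q \<delta> v \<in> run_rels Q"
  using fold_closed[where \<delta> = \<delta>, OF assms(1) _ assms(2)]
  unfolding run_rel_def run_rels_def by blast

lemma run_rel_Nil: "run_rel Q \<delta> [] = Id"
  by (auto simp: run_rel_def)

lemma run_rel_append:
  assumes "\<And>q a. q \<in> Q \<Longrightarrow> a \<in> Gamma \<Longrightarrow> \<delta> q a \<in> Q" "v \<in> lists Gamma"
  shows "run_rel Q \<delta> (v @ w) = run_rel Q \<delta> v O run_rel Q \<delta> w"
  using fold_closed[where \<delta> = \<delta>, OF assms(1) _ assms(2)]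
  unfolding run_rel_def by auto

lemma relcomp_list_run_rel_concat:
  assumes "\<And>q a. q \<in> Q \<Longrightarrow> a \<in> Gamma \<Longrightarrow> \<delta> q a \<in> Q" "set vs \<subseteq> lists Gamma"
  shows "relcomp_list.F (map (run_rel Q \<delta>) vs) = run_rel Q \<delta> (concat vs)"
  using assms(2) by (induction vs) (simp_all add: run_rel_Nil run_rel_append[OF assms(1)])

lemma relcomp_list_empty: "{} \<in> set Rs \<Longrightarrow> relcomp_list.F Rs = {}"
  by (induction Rs) auto

section \<open>Lexicographic transductions\<close>

lemma simple_transE:
  assumes "simple_trans Sig Gamma f"
  obtains n :: nat and Ls ws where "\<And>i. i < n \<Longrightarrow> regular Sig (Ls i)" "\<And>i. i < n \<Longrightarrow> set (ws i) \<subseteq> Gamma"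
    "\<And>i j. i < n \<Longrightarrow> j < n \<Longrightarrow> i \<noteq> j \<Longrightarrow> Ls i \<inter> Ls j = {}"
    "\<And>u i. i < n \<Longrightarrow> u \<in> Ls i \<Longrightarrow> f u = Some (ws i)"
    "\<And>u. \<forall>i<n. u \<notin> Ls i \<Longrightarrow> f u = None"
proof -
  from assms obtain n :: nat and Ls ws where
    "(\<forall>i<n. regular Sig (Ls i) \<and> length (ws i) \<le> 1 \<and> set (ws i) \<subseteq> Gamma) \<and>
     (\<forall>i<n. \<forall>j<n. i \<noteq> j \<longrightarrow> Ls i \<inter> Ls j = {}) \<and>
     (\<forall>u. (\<forall>i<n. u \<in> Ls i \<longrightarrow> f u = Some (ws i)) \<and> ((\<forall>i<n. u \<notin> Ls i) \<longrightarrow> f u = None))"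
    unfolding simple_trans_def by (elim exE) (rule that)
  then show thesis by (intro that[of n Ls ws]) auto
qed

lemma lex_outputs:
  "lex k Sig Gamma f \<Longrightarrow> f u = Some v \<Longrightarrow> u \<in> lists Sig \<and> v \<in> lists Gamma"
proof (induction arbitrary: u v rule: lex.induct)
  case (lex0 Sig Gamma f)
  obtain n :: nat and Ls ws where reg: "\<And>i. i < n \<Longrightarrow> regular Sig (Ls i)"
    and ws: "\<And>i. i < n \<Longrightarrow> set (ws i) \<subseteq> Gamma"
    and "\<And>i j. i < n \<Longrightarrow> j < n \<Longrightarrow> i \<noteq> j \<Longrightarrow> Ls i \<inter> Ls j = {}"
    and f_in: "\<And>u i. i < n \<Longrightarrow> u \<in> Ls i \<Longrightarrow> f u = Some (ws i)"
    and f_out: "\<And>u. \<forall>i<n. u \<notin> Ls i \<Longrightarrow> f u = None"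
    by (rule simple_transE[OF lex0.hyps], rule that)
  have "\<not> (\<forall>i<n. u \<notin> Ls i)" using f_out[of u] lex0.prems by auto
  then obtain i where i: "i < n" "u \<in> Ls i" by blast
  have "Ls i \<subseteq> lists Sig" using reg[OF i(1)] by (simp add: regular_def)
  moreover have "v = ws i" using f_in[OF i] lex0.prems by simp
  ultimately show ?case using i(2) ws[OF i(1)] by auto
next
  case (lexSuc B lt k Sig Gamma f)
  let ?rs = "map (\<lambda>b. f (tensor u b)) (enum_words B lt (length u))"
  have u: "u \<in> lists Sig" and defined: "None \<notin> set ?rs" and v: "v = concat (map the ?rs)"
    using lexSuc.prems by (auto simp: maplex_def Let_def split: if_splits)
  have "w \<in> lists Gamma" if w: "w \<in> set (map the ?rs)" for w
  proof -
    obtain b where b: "b \<in> set (enum_words B lt (length u))" "w = the (f (tensor u b))"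
      using w by auto
    have "f (tensor u b) \<noteq> None" using defined b(1) by (metis image_eqI list.set_map)
    then have "f (tensor u b) = Some w" using b(2) by auto
    then show ?thesis using lexSuc.IH by blast
  qed
  then have "v \<in> lists Gamma" unfolding v in_lists_conv_set set_concat by blast
  with u show ?case by blast
qed

lemma dfa_computable_simple_trans:
  assumes "simple_trans Sig Gamma f" "\<And>q a. q \<in> Q \<Longrightarrow> a \<in> Gamma \<Longrightarrow> \<delta> q a \<in> Q"
  shows "dfa_computable Sig (run_rels Q) (\<lambda>u. case_option {} (run_rel Q \<delta>) (f u))"
proof -
  obtain n :: nat and Ls ws where reg: "\<And>i. i < n \<Longrightarrow> regular Sig (Ls i)"
    and ws: "\<And>i. i < n \<Longrightarrow> set (ws i) \<subseteq> Gamma"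
    and disjoint: "\<And>i j. i < n \<Longrightarrow> j < n \<Longrightarrow> i \<noteq> j \<Longrightarrow> Ls i \<inter> Ls j = {}"
    and f_in: "\<And>u i. i < n \<Longrightarrow> u \<in> Ls i \<Longrightarrow> f u = Some (ws i)"
    and f_out: "\<And>u. \<forall>i<n. u \<notin> Ls i \<Longrightarrow> f u = None"
    by (rule simple_transE[OF assms(1)], rule that)
  define pick where "pick \<chi> = (if \<exists>i<n. \<chi> i then run_rel Q \<delta> (ws (SOME i. i < n \<and> \<chi> i)) else {})"
    for \<chi> :: "nat \<Rightarrow> bool"
  have "dfa_computable Sig (\<Pi>\<^sub>E i\<in>{..<n}. UNIV) (\<lambda>u. \<lambda>i\<in>{..<n}. u \<in> Ls i)"
    by (intro dfa_computable_PiE regular_imp_dfa_computable reg) auto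
  moreover have "pick \<chi> \<in> run_rels Q" for \<chi>
  proof (cases "\<exists>i<n. \<chi> i")
    case True
    then have "(SOME i. i < n \<and> \<chi> i) < n" using someI_ex[of "\<lambda>i. i < n \<and> \<chi> i"] by blast
    then show ?thesis
      using True ws by (simp add: pick_def run_rel_in_run_rels[OF assms(2)] in_lists_conv_set subset_iff)
  qed (auto simp: pick_def run_rels_def)
  ultimately have "dfa_computable Sig (run_rels Q) (\<lambda>u. pick (\<lambda>i\<in>{..<n}. u \<in> Ls i))"
    by (rule dfa_computable_comp)
  then show ?thesis
  proof (rule dfa_computable_cong)
    fix u
    show "pick (\<lambda>i\<in>{..<n}. u \<in> Ls i) = case_option {} (run_rel Q \<delta>) (f u)"
    proof (cases "\<exists>i<n. u \<in> Ls i")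
      case True
      then obtain i where i: "i < n" "u \<in> Ls i" by blast
      let ?\<chi> = "\<lambda>j\<in>{..<n}. u \<in> Ls j"
      have "(SOME j. j < n \<and> ?\<chi> j) = i"
      proof (rule some_equality)
        show "i < n \<and> ?\<chi> i" using i by simp
        show "j = i" if j: "j < n \<and> ?\<chi> j" for j
        proof (rule ccontr)
          assume "j \<noteq> i"
          then have "Ls j \<inter> Ls i = {}" using disjoint j i(1) by simp
          then show False using j i by auto
        qed
      qed
      moreover have "pick ?\<chi> = run_rel Q \<delta> (ws (SOME j. j < n \<and> ?\<chi> j))"
        unfolding pick_def using i by (intro if_P) auto
      ultimately show ?thesis using f_in[OF i] by simp
    next
      case False
      then show ?thesis by (simp add: pick_def f_out)
    qed
  qed
qed

lemma maplex_run_rel: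
  assumes "\<And>q a. q \<in> Q \<Longrightarrow> a \<in> Gamma \<Longrightarrow> \<delta> q a \<in> Q"
    and "\<And>w v. f w = Some v \<Longrightarrow> v \<in> lists Gamma" and "u \<in> lists Sig"
  shows "case_option {} (run_rel Q \<delta>) (maplex Sig B lt f u) =
    relcomp_list.F (map (\<lambda>b. case_option {} (run_rel Q \<delta>) (f (tensor u b))) (enum_words B lt (length u)))"
proof -
  let ?rs = "map (\<lambda>b. f (tensor u b)) (enum_words B lt (length u))"
  have rels: "map (\<lambda>b. case_option {} (run_rel Q \<delta>) (f (tensor u b))) (enum_words B lt (length u))
      = map (case_option {} (run_rel Q \<delta>)) ?rs"
    by simp
  show ?thesis
  proof (cases "None \<in> set ?rs")
    case True
    have "{} = case_option {} (run_rel Q \<delta>) None" by simp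
    with True have "{} \<in> set (map (case_option {} (run_rel Q \<delta>)) ?rs)"
      by (metis image_eqI list.set_map)
    then show ?thesis using True
      unfolding rels by (simp add: maplex_def relcomp_list_empty)
  next
    case False
    have defined: "r = Some (the r)" if "r \<in> set ?rs" for r
    proof -
      have "r \<noteq> None" using that False by metis
      then show ?thesis by simp
    qed
    have "case_option {} (run_rel Q \<delta>) r = run_rel Q \<delta> (the r)" if "r \<in> set ?rs" for r
      by (subst defined[OF that]) simp
    then have "map (case_option {} (run_rel Q \<delta>)) ?rs = map (\<lambda>r. run_rel Q \<delta> (the r)) ?rs"
      by (intro map_cong refl)
    then have map_rels: "map (case_option {} (run_rel Q \<delta>)) ?rs = map (run_rel Q \<delta>) (map the ?rs)"
      by simp
    have "the r \<in> lists Gamma" if r: "r \<in> set ?rs" for r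
    proof -
      obtain b where "r = f (tensor u b)" using r by auto
      then show ?thesis using assms(2)[of "tensor u b" "the r"] defined[OF r] by simp
    qed
    then have "set (map the ?rs) \<subseteq> lists Gamma" by auto
    moreover have "maplex Sig B lt f u = Some (concat (map the ?rs))"
      using False assms(3) by (simp add: maplex_def)
    ultimately show ?thesis
      unfolding rels map_rels by (simp only: relcomp_list_run_rel_concat[OF assms(1)] option.case)
  qed
qed

lemma lex_dfa_computable:
  assumes "lex k Sig Gamma f" "finite Q" "\<And>q a. q \<in> Q \<Longrightarrow> a \<in> Gamma \<Longrightarrow> \<delta> q a \<in> Q"
  shows "dfa_computable Sig (run_rels Q) (\<lambda>u. case_option {} (run_rel Q \<delta>) (f u))"
  using assms(1,3)
proof (induction rule: lex.induct)
  case (lex0 Sig Gamma f)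
  then show ?case by (rule dfa_computable_simple_trans)
next
  case (lexSuc B lt k Sig Gamma f)
  have "dfa_computable Sig (run_rels Q) (\<lambda>u. relcomp_list.F
      (map (\<lambda>b. case_option {} (run_rel Q \<delta>) (f (tensor u b))) (enum_words B lt (length u))))"
    using lexSuc.hyps(1,2) finite_run_rels[OF assms(2)] relcomp_in_run_rels Id_in_run_rels
      lexSuc.IH[OF lexSuc.prems]
    by (rule relcomp_list.dfa_computable_lex_product)
  moreover have "\<And>w v. f w = Some v \<Longrightarrow> v \<in> lists Gamma"
    using lex_outputs[OF lexSuc.hyps(3)] by blast
  ultimately show ?case
    by (elim dfa_computable_cong) (simp add: maplex_run_rel[where \<delta> = \<delta>, OF lexSuc.prems])
qed

theorem mainTheorem15:
  fixes Sig :: "('a, 'b) ltr set" and Gamma :: "'g set"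
    and f :: "('a, 'b) ltr list \<Rightarrow> 'g list option" and k :: nat
  assumes "finite Sig" and "finite Gamma"
    and "lex k Sig Gamma f"
    and "regular Gamma L"
  shows "regular Sig {u. \<exists>v. f u = Some v \<and> v \<in> L}"
proof -
  obtain Q :: "nat set" and q0 \<delta> F where Q: "finite Q" "q0 \<in> Q"
    and \<delta>: "\<forall>q\<in>Q. \<forall>a\<in>Gamma. \<delta> q a \<in> Q" and L: "L = {w \<in> lists Gamma. fold (\<lambda>a q. \<delta> q a) w q0 \<in> F}"
    using assms(4) unfolding regular_def by blast
  have "dfa_computable Sig (run_rels Q) (\<lambda>u. case_option {} (run_rel Q \<delta>) (f u))"
    by (rule lex_dfa_computable[OF assms(3) Q(1)]) (use \<delta> in blast)
  then have "regular Sig {u \<in> lists Sig. \<exists>q\<in>F. (q0, q) \<in> case_option {} (run_rel Q \<delta>) (f u)}"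
    by (rule regular_if_dfa_computable[OF assms(1)])
  moreover have "{u \<in> lists Sig. \<exists>q\<in>F. (q0, q) \<in> case_option {} (run_rel Q \<delta>) (f u)}
      = {u. \<exists>v. f u = Some v \<and> v \<in> L}"
    using lex_outputs[OF assms(3)] Q(2) by (auto simp: L run_rel_def split: option.splits)
  ultimately show ?thesis by simp
qed

end
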